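(* For every $m\geq 1$, let $(p_m(x),q_m(x))$ be the symmetric decomposition of $x^mP_m(1/x)$. Then $p_m(x)$ and $q_m(x)$ are both unimodal.
   Context: The Boros–Moll polynomial is $P_m(x)=\sum_{i=0}^m d_i(m)x^i$ with $d_i(m)=2^{-2m}\sum_{k=i}^m 2^k\binom{2m-2k}{m-k}\binom{m+k}{k}\binom{k}{i}$. For a polynomial $f$ of degree $n$, its symmetric decomposition is the pair $(a(x),b(x))$ with $a(x)=\frac{f(x)-x^{n+1}f(1/x)}{1-x}$, $b(x)=\frac{x^nf(1/x)-f(x)}{1-x}$, so $f=a+xb$. A polynomial $\sum_{i=0}^n f_ix^i$ is unimodal if $f_0\le f_1\le\cdots\le f_k\ge f_{k+1}\ge\cdots\ge f_n$ for some $k$. *)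

theory Defs
  imports "HOL-Computational_Algebra.Polynomial"
begin

definition bm_d :: "nat \<Rightarrow> nat \<Rightarrow> real" where
  "bm_d i m = (1 / 2 ^ (2*m)) *
     (\<Sum>k=i..m. 2 ^ k * real ((2*m - 2*k) choose (m - k)) * real ((m + k) choose k) * real (k choose i))"

definition boros_moll :: "nat \<Rightarrow> real poly" where
  "boros_moll m = (\<Sum>i\<le>m. monom (bm_d i m) i)"

text \<open>x^n f(1/x) as a polynomial (for deg f \<le> n).\<close>
definition rev_poly :: "nat \<Rightarrow> real poly \<Rightarrow> real poly" where
  "rev_poly n f = (\<Sum>i\<le>n. monom (coeff f i) (n - i))"

definition sym_dec_a :: "real poly \<Rightarrow> real poly" where
  "sym_dec_a f = (f - monom 1 1 * rev_poly (degree f) f) div [:1, -1:]"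

definition sym_dec_b :: "real poly \<Rightarrow> real poly" where
  "sym_dec_b f = (rev_poly (degree f) f - f) div [:1, -1:]"

definition unimodal_poly :: "real poly \<Rightarrow> bool" where
  "unimodal_poly f \<longleftrightarrow> (\<exists>k\<le>degree f.
      (\<forall>i. i < k \<longrightarrow> coeff f i \<le> coeff f (Suc i)) \<and>
      (\<forall>i. k \<le> i \<and> i < degree f \<longrightarrow> coeff f i \<ge> coeff f (Suc i)))"

end

theory Submission
  imports Defs
begin

(* Write d_i for d_i(m). The coefficients of f = x^m P_m(1/x) are d_m, ..., d_0, and the
   consecutive differences of the coefficients of a and b are d_(m-1-i) - d_i and
   d_(i+1) - d_(m-1-i). Both therefore rise up to index floor(m/2) and fall afterwards, provided
   d_i <= d_j whenever i <= j and i + j = m - 1, and d_(m-s) <= d_s whenever 2s <= m.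
   Now 4^m d_i = sum_k w_k C(k,i) with w_k = 2^k C(2m-2k, m-k) C(m+k, k). The second
   comparison holds termwise, as C(k, m-s) <= C(k, s) for k <= m. For the first, summation by
   parts (the boundary term vanishes, since C(m+1, i+1) = C(m+1, j+1)) turns the difference into
   sum_k (w_(k+1) - w_k) (C(k+1, i+1) - C(k+1, j+1)), whose terms are nonnegative because w_k
   is nondecreasing in k. *)

lemma binomial_le_binomial_of_le_add:
  fixes k a b :: nat
  assumes "a \<le> b" "k \<le> a + b"
  shows "k choose b \<le> k choose a"
proof (cases "b \<le> k")
  case False
  then show ?thesis by (simp add: binomial_eq_0)
next
  case True
  show ?thesis
  proof (cases "k div 2 \<le> a")
    case True
    then show ?thesis using binomial_antimono[of a b k] assms \<open>b \<le> k\<close> by simp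
  next
    case False
    have "k choose b = k choose (k - b)" using binomial_symmetric[OF \<open>b \<le> k\<close>] .
    also have "\<dots> \<le> k choose a" using binomial_mono[of "k - b" a k] assms False by auto
    finally show ?thesis .
  qed
qed

lemma sum_mult_binomial_by_parts:
  fixes w :: "nat \<Rightarrow> 'a::comm_ring_1"
  shows "(\<Sum>k\<le>n. w k * of_nat (k choose j)) =
    w n * of_nat (Suc n choose Suc j) - (\<Sum>k<n. (w (Suc k) - w k) * of_nat (Suc k choose Suc j))"
proof (induction n)
  case 0
  then show ?case by (cases j) simp_all
next
  case (Suc n)
  have "of_nat (Suc (Suc n) choose Suc j) = (of_nat (Suc n choose j) + of_nat (Suc n choose Suc j) :: 'a)"
    by simp
  with Suc.IH show ?case by (simp add: algebra_simps)
qed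

lemma weighted_binomial_sum_mono:
  fixes w :: "nat \<Rightarrow> 'a::linordered_idom"
  assumes mono: "\<And>k. k < n \<Longrightarrow> w k \<le> w (Suc k)" and "i \<le> j" "i + j + 1 = n"
  shows "(\<Sum>k\<le>n. w k * of_nat (k choose i)) \<le> (\<Sum>k\<le>n. w k * of_nat (k choose j))"
proof -
  have "Suc n - Suc j = Suc i" using assms by simp
  then have boundary: "Suc n choose Suc i = Suc n choose Suc j"
    using binomial_symmetric[of "Suc j" "Suc n"] assms by simp
  have "(\<Sum>k<n. (w (Suc k) - w k) * of_nat (Suc k choose Suc j))
      \<le> (\<Sum>k<n. (w (Suc k) - w k) * of_nat (Suc k choose Suc i))"
  proof (rule sum_mono, rule mult_left_mono)
    fix k assume "k \<in> {..<n}"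
    then show "0 \<le> w (Suc k) - w k" using mono by simp
    show "of_nat (Suc k choose Suc j) \<le> (of_nat (Suc k choose Suc i) :: 'a)"
      using \<open>k \<in> {..<n}\<close> assms
      by (simp only: of_nat_le_iff, intro binomial_le_binomial_of_le_add) auto
  qed
  then show ?thesis
    unfolding sum_mult_binomial_by_parts boundary by (rule diff_left_mono)
qed

lemma weighted_binomial_sum_mirror_le:
  fixes w :: "nat \<Rightarrow> 'a::linordered_idom"
  assumes "\<And>k. 0 \<le> w k" "2 * s \<le> n"
  shows "(\<Sum>k\<le>n. w k * of_nat (k choose (n - s))) \<le> (\<Sum>k\<le>n. w k * of_nat (k choose s))"
proof (rule sum_mono, rule mult_left_mono)
  fix k assume "k \<in> {..n}"
  then show "of_nat (k choose (n - s)) \<le> (of_nat (k choose s) :: 'a)"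
    using assms by (simp add: binomial_le_binomial_of_le_add)
qed (use assms in simp)

lemma central_binomial_Suc:
  "(Suc n)\<^sup>2 * (2 * Suc n choose Suc n) = (2 * n + 2) * (2 * n + 1) * (2 * n choose n)"
proof -
  have "(2 * n + 1 choose n) = (2 * n + 1 choose Suc n)"
    using binomial_symmetric[of n "2 * n + 1"] by simp
  then have odd: "Suc n * (2 * n + 1 choose n) = (2 * n + 1) * (2 * n choose n)"
    using Suc_times_binomial[of n "2 * n"] by simp
  have even: "Suc n * (2 * Suc n choose Suc n) = (2 * n + 2) * (2 * n + 1 choose n)"
    using Suc_times_binomial[of n "2 * n + 1"] by simp
  have "(Suc n)\<^sup>2 * (2 * Suc n choose Suc n) = Suc n * (Suc n * (2 * Suc n choose Suc n))"
    by (simp only: power2_eq_square mult.assoc)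
  also have "\<dots> = (2 * n + 2) * (Suc n * (2 * n + 1 choose n))"
    by (simp only: even mult.left_commute)
  also have "\<dots> = (2 * n + 2) * (2 * n + 1) * (2 * n choose n)"
    by (simp only: odd mult.assoc)
  finally show ?thesis .
qed

definition bm_weight :: "nat \<Rightarrow> nat \<Rightarrow> nat" where
  "bm_weight m k = 2 ^ k * ((2 * m - 2 * k) choose (m - k)) * ((m + k) choose k)"

(* With t = m - k - 1, the ratio of consecutive weights is (t+1)(m+k+1) / ((2t+1)(k+1)). *)
lemma bm_weight_le_Suc:
  assumes "k < m"
  shows "bm_weight m k \<le> bm_weight m (Suc k)"
proof -
  obtain t where m: "m = Suc (k + t)" using less_imp_Suc_add[OF assms] ..
  define C where "C = 2 * t choose t"
  define N where "N = (m + k) choose k"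
  define X where "X = 2 * Suc t choose Suc t"
  define Y where "Y = Suc (m + k) choose Suc k"
  have X: "(Suc t)\<^sup>2 * X = (2 * t + 2) * (2 * t + 1) * C"
    unfolding X_def C_def by (rule central_binomial_Suc)
  have Y: "Suc k * Y = Suc (m + k) * N"
    unfolding Y_def N_def by (rule Suc_times_binomial)
  have "X * N * ((Suc t)\<^sup>2 * Suc k) = ((Suc t)\<^sup>2 * X) * (N * Suc k)"
    by (simp only: ac_simps)
  also have "\<dots> = (2 * t + 2) * C * N * ((2 * t + 1) * Suc k)"
    unfolding X by (simp only: ac_simps)
  also have "\<dots> \<le> (2 * t + 2) * C * N * (Suc (m + k) * Suc t)"
    using m by (intro mult_left_mono) (simp_all add: algebra_simps)
  also have "\<dots> = 2 * C * (Suc k * Y) * (Suc t * Suc t)"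
    unfolding Y by (simp add: algebra_simps)
  also have "\<dots> = 2 * C * Y * ((Suc t)\<^sup>2 * Suc k)"
    by (simp only: power2_eq_square ac_simps)
  finally have "X * N \<le> 2 * C * Y"
    by simp
  moreover have "bm_weight m k = 2 ^ k * (X * N)"
    unfolding bm_weight_def X_def N_def using m by simp
  moreover have "bm_weight m (Suc k) = 2 ^ k * (2 * C * Y)"
    unfolding bm_weight_def C_def Y_def using m by simp
  ultimately show ?thesis by simp
qed

lemma bm_d_eq_weighted_sum:
  "bm_d i m = (\<Sum>k\<le>m. real (bm_weight m k) * real (k choose i)) / 2 ^ (2 * m)"
proof -
  have "(\<Sum>k=i..m. 2 ^ k * real ((2*m - 2*k) choose (m - k)) * real ((m + k) choose k) * real (k choose i))
      = (\<Sum>k\<le>m. real (bm_weight m k) * real (k choose i))"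
    by (rule sum.mono_neutral_cong_left) (auto simp: bm_weight_def binomial_eq_0)
  then show ?thesis
    unfolding bm_d_def by simp
qed

lemma bm_d_nonneg: "0 \<le> bm_d i m"
  unfolding bm_d_eq_weighted_sum by (simp add: sum_nonneg)

lemma bm_d_0_pos: "0 < bm_d 0 m"
proof -
  have "0 < real (bm_weight m 0) * real (0 choose 0)"
    by (simp add: bm_weight_def)
  also have "\<dots> \<le> (\<Sum>k\<le>m. real (bm_weight m k) * real (k choose 0))"
    by (rule member_le_sum) auto
  finally show ?thesis
    unfolding bm_d_eq_weighted_sum by simp
qed

lemma bm_d_eq_0: "m < i \<Longrightarrow> bm_d i m = 0"
  unfolding bm_d_def by simp

lemma bm_d_le_complement:
  assumes "i \<le> j" "i + j + 1 = m"
  shows "bm_d i m \<le> bm_d j m"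
  unfolding bm_d_eq_weighted_sum
  using weighted_binomial_sum_mono[of m "\<lambda>k. real (bm_weight m k)" i j] assms bm_weight_le_Suc
  by (simp add: divide_right_mono)

lemma bm_d_mirror_le:
  assumes "2 * s \<le> m"
  shows "bm_d (m - s) m \<le> bm_d s m"
  unfolding bm_d_eq_weighted_sum
  using weighted_binomial_sum_mirror_le[of "\<lambda>k. real (bm_weight m k)" s m] assms
  by (simp add: divide_right_mono)

lemma coeff_rev_poly: "coeff (rev_poly n f) j = (if j \<le> n then coeff f (n - j) else 0)"
proof -
  have "coeff (rev_poly n f) j = (\<Sum>i\<le>n. if n - i = j then coeff f i else 0)"
    unfolding rev_poly_def by (simp add: coeff_sum coeff_monom)
  also have "\<dots> = (\<Sum>i\<in>(if j \<le> n then {n - j} else {}). coeff f i)"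
    by (rule sum.mono_neutral_cong_right) (auto split: if_splits)
  also have "\<dots> = (if j \<le> n then coeff f (n - j) else 0)"
    by simp
  finally show ?thesis .
qed

lemma degree_rev_poly:
  assumes "coeff f 0 \<noteq> 0"
  shows "degree (rev_poly n f) = n"
proof (rule antisym)
  show "degree (rev_poly n f) \<le> n"
    by (rule degree_le) (simp add: coeff_rev_poly)
  show "n \<le> degree (rev_poly n f)"
    by (rule le_degree) (simp add: coeff_rev_poly assms)
qed

lemma rev_poly_rev_poly:
  assumes "degree f \<le> n"
  shows "rev_poly n (rev_poly n f) = f"
  by (rule poly_eqI) (use assms in \<open>auto simp: coeff_rev_poly coeff_eq_0\<close>)

lemma poly_rev_poly_1:
  assumes "degree f \<le> n"
  shows "poly (rev_poly n f) 1 = poly f 1"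
proof -
  have "poly f 1 = (\<Sum>i\<le>degree f. coeff f i)"
    by (simp add: poly_altdef)
  also have "\<dots> = (\<Sum>i\<le>n. coeff f i)"
    using assms by (intro sum.mono_neutral_left) (auto simp: coeff_eq_0)
  finally show ?thesis
    unfolding rev_poly_def by (simp add: poly_sum poly_monom)
qed

lemma coeff_div_one_minus_X_diff:
  fixes p :: "'a::field poly"
  assumes "poly p 1 = 0"
  shows "coeff (p div [:1, -1:]) (Suc n) - coeff (p div [:1, -1:]) n = coeff p (Suc n)"
proof -
  define q where "q = p div [:1, -1:]"
  have "[:-1, 1:] dvd p"
    using assms poly_eq_0_iff_dvd by auto
  moreover have "[:1, -1:] = - [:-1, 1:]"
    by simp
  ultimately have "[:1, -1:] dvd p"
    by (metis minus_dvd_iff)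
  then have "p = q * [:1, -1:]"
    unfolding q_def by (rule dvd_div_mult_self[symmetric])
  then show ?thesis
    unfolding q_def[symmetric] by simp
qed

lemma sym_dec_a_coeff_diff:
  "coeff (sym_dec_a f) (Suc i) - coeff (sym_dec_a f) i =
    coeff f (Suc i) - coeff (rev_poly (degree f) f) i"
proof -
  have "poly (f - monom 1 1 * rev_poly (degree f) f) 1 = 0"
    by (simp add: poly_rev_poly_1 poly_monom)
  then show ?thesis
    unfolding sym_dec_a_def by (simp add: coeff_div_one_minus_X_diff coeff_monom_mult)
qed

lemma sym_dec_b_coeff_diff:
  "coeff (sym_dec_b f) (Suc i) - coeff (sym_dec_b f) i =
    coeff (rev_poly (degree f) f) (Suc i) - coeff f (Suc i)"
proof -
  have "poly (rev_poly (degree f) f - f) 1 = 0"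
    by (simp add: poly_rev_poly_1)
  then show ?thesis
    unfolding sym_dec_b_def by (simp add: coeff_div_one_minus_X_diff)
qed

lemma unimodal_polyI:
  assumes "\<And>i. i < K \<Longrightarrow> coeff f i \<le> coeff f (Suc i)"
    and "\<And>i. K \<le> i \<Longrightarrow> coeff f (Suc i) \<le> coeff f i"
  shows "unimodal_poly f"
  unfolding unimodal_poly_def
  by (rule exI[of _ "min K (degree f)"]) (use assms in auto)

lemma coeff_boros_moll: "coeff (boros_moll m) i = bm_d i m"
  unfolding boros_moll_def by (simp add: coeff_sum coeff_monom bm_d_eq_0)

lemma degree_boros_moll_le: "degree (boros_moll m) \<le> m"
  by (rule degree_le) (simp add: coeff_boros_moll bm_d_eq_0)

lemma coeff_rev_boros_moll:
  "coeff (rev_poly m (boros_moll m)) j = (if j \<le> m then bm_d (m - j) m else 0)"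
  by (simp add: coeff_rev_poly coeff_boros_moll)

lemma degree_rev_boros_moll: "degree (rev_poly m (boros_moll m)) = m"
  using bm_d_0_pos[of m] by (intro degree_rev_poly) (simp add: coeff_boros_moll)

lemma rev_rev_boros_moll: "rev_poly m (rev_poly m (boros_moll m)) = boros_moll m"
  by (rule rev_poly_rev_poly[OF degree_boros_moll_le])

lemma unimodal_sym_dec_a_rev_boros_moll: "unimodal_poly (sym_dec_a (rev_poly m (boros_moll m)))"
proof (rule unimodal_polyI[where K = "m div 2"])
  let ?a = "sym_dec_a (rev_poly m (boros_moll m))"
  have diff: "coeff ?a (Suc i) - coeff ?a i =
      (if Suc i \<le> m then bm_d (m - Suc i) m else 0) - bm_d i m" for i
    using sym_dec_a_coeff_diff[of "rev_poly m (boros_moll m)" i]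
    by (simp add: degree_rev_boros_moll rev_rev_boros_moll coeff_rev_boros_moll coeff_boros_moll)
  show "coeff ?a i \<le> coeff ?a (Suc i)" if "i < m div 2" for i
  proof -
    have "bm_d i m \<le> bm_d (m - Suc i) m"
      using that by (intro bm_d_le_complement) auto
    moreover have "Suc i \<le> m"
      using that by presburger
    ultimately show ?thesis
      using diff[of i] by simp
  qed
  show "coeff ?a (Suc i) \<le> coeff ?a i" if "m div 2 \<le> i" for i
  proof (cases "Suc i \<le> m")
    case True
    then have "bm_d (m - Suc i) m \<le> bm_d i m"
      using that by (intro bm_d_le_complement) auto
    then show ?thesis
      using diff[of i] True by simp
  next
    case False
    then show ?thesis
      using diff[of i] bm_d_nonneg[of i m] by simp
  qed
qed

lemma unimodal_sym_dec_b_rev_boros_moll: "unimodal_poly (sym_dec_b (rev_poly m (boros_moll m)))"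
proof (rule unimodal_polyI[where K = "m div 2"])
  let ?b = "sym_dec_b (rev_poly m (boros_moll m))"
  have diff: "coeff ?b (Suc i) - coeff ?b i =
      bm_d (Suc i) m - (if Suc i \<le> m then bm_d (m - Suc i) m else 0)" for i
    using sym_dec_b_coeff_diff[of "rev_poly m (boros_moll m)" i]
    by (simp add: degree_rev_boros_moll rev_rev_boros_moll coeff_rev_boros_moll coeff_boros_moll)
  show "coeff ?b i \<le> coeff ?b (Suc i)" if "i < m div 2" for i
  proof -
    have "bm_d (m - Suc i) m \<le> bm_d (Suc i) m"
      using that by (intro bm_d_mirror_le) auto
    moreover have "Suc i \<le> m"
      using that by presburger
    ultimately show ?thesis
      using diff[of i] by simp
  qed
  show "coeff ?b (Suc i) \<le> coeff ?b i" if "m div 2 \<le> i" for i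
  proof (cases "Suc i \<le> m")
    case True
    then have "bm_d (m - (m - Suc i)) m \<le> bm_d (m - Suc i) m"
      using that by (intro bm_d_mirror_le) auto
    then show ?thesis
      using diff[of i] True by simp
  next
    case False
    then show ?thesis
      using diff[of i] by (simp add: bm_d_eq_0)
  qed
qed

theorem proposition1p4:
  fixes m :: nat
  assumes "m \<ge> 1"
  shows "unimodal_poly (sym_dec_a (rev_poly m (boros_moll m))) \<and>
         unimodal_poly (sym_dec_b (rev_poly m (boros_moll m)))"
  using unimodal_sym_dec_a_rev_boros_moll unimodal_sym_dec_b_rev_boros_moll by blast

end
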